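(* Consider robust dynamic pricing with feedback corrupted in at most $C$ rounds ($C$ known). The meta-algorithm described in the context, with the commitment subroutine \textsc{CommitKnown}, guarantees \[ \sum_{\ell\in\mathcal L}R(\ell)\le 2N_{\textsc{F}}+6C+3. \]
   Context: Robust dynamic pricing: there are $T$ rounds and an unknown valuation $v^\star\in[0,1)$. At each round $t$ the seller posts a price $p_t\in[0,1]$. The true sale indicator is $y_t=\mathbbm 1\{p_t\le v^\star\}$; the seller observes $\sigma_t\in\{0,1\}$, and at most $C$ rounds are corrupted: $|\{t\in[T]:\sigma_t\neq y_t\}|\le C$. Meta-algorithm: let $D=\lceil\log_2 T\rceil$. Consider the complete binary tree of intervals of depth $D$ with root $[0,1)$, where each non-leaf node $[L,R)$ has children $[L,M)$ and $[M,R)$, $M=(L+R)/2$; the depth-$D$ nodes are the leaves, forming the set $\mathcal L$ (each of length at most $1/T$), and $\ell^\star$ is the unique leaf containing $v^\star$. The algorithm keeps a current node $I$, initially the root, and repeats until the horizon ends: if $I=[L,R)$ is not a leaf, it performs a safety check — post $L$ and observe $\sigma_L$, post $R$ and observe $\sigma_R$; the check fails if $\sigma_L=0$ or $\sigma_R=1$ (by convention the query at $L=0$ and the query at $R=1$ always count as passing). On failure $I$ becomes its parent; otherwise it posts $M$, observes $\sigma_M$, and $I$ becomes $[M,R)$ if $\sigma_M=1$ and $[L,M)$ if $\sigma_M=0$. If $I$ is a leaf, the commitment subroutine is run on $I$; if it returns FAIL, $I$ becomes its parent. \textsc{CommitKnown}: each leaf $\ell$ has a counter $s_\ell$, initialized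 to $0$ at the start of the horizon and shared across all calls. On leaf $\ell=[L,R)$ it repeats: if $s_\ell\le C$, post $L$ and observe $\sigma_L$, post $R$ and observe $\sigma_R$; if $\sigma_L=0$ or $\sigma_R=1$, return FAIL, else increase $s_\ell$ by $1$. If $s_\ell>C$, post $L$ (and continue doing so). For a leaf $\ell$, $Q(\ell)$ is the set of rounds during which the commitment subroutine runs on $\ell$, and $R(\ell)=\sum_{t\in Q(\ell)}(v^\star-p_t\mathbbm 1\{p_t\le v^\star\})$. $N_{\textsc{F}}$ is the number of times the commitment subroutine returns FAIL on a leaf different from $\ell^\star$. *)

theory Defs
  imports Complex_Main
begin

text \<open>Tree nodes are pairs (depth d, index k) representing the dyadic interval
  [k/2^d, (k+1)/2^d).  The leaves are the nodes at depth D.\<close>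

definition depthD :: "nat \<Rightarrow> nat" where
  "depthD T = nat \<lceil>log 2 (real T)\<rceil>"

definition lo :: "nat \<Rightarrow> nat \<Rightarrow> real" where
  "lo d k = real k / 2 ^ d"

definition hi :: "nat \<Rightarrow> nat \<Rightarrow> real" where
  "hi d k = real (Suc k) / 2 ^ d"

definition mid :: "nat \<Rightarrow> nat \<Rightarrow> real" where
  "mid d k = (lo d k + hi d k) / 2"

text \<open>Algorithm state: current node (dep, idx), phase within the current
  check (0: about to post L, 1: about to post R, 2: about to post M),
  whether the L-query of the current check passed, and the shared leaf
  counters s_l (indexed by the leaf index).\<close>

datatype st = St (dep: nat) (idx: nat) (ph: nat) (pl: bool) (cnt: "nat \<Rightarrow> nat")

definition init_st :: st where
  "init_st = St 0 0 0 False (\<lambda>_. 0)"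

definition parent_st :: "st \<Rightarrow> st" where
  "parent_st s = St (dep s - 1) (idx s div 2) 0 False (cnt s)"

definition price :: "nat \<Rightarrow> nat \<Rightarrow> st \<Rightarrow> real" where
  "price D C s =
     (if dep s < D then
        (if ph s = 0 then lo (dep s) (idx s)
         else if ph s = 1 then hi (dep s) (idx s)
         else mid (dep s) (idx s))
      else
        (if cnt s (idx s) \<le> C \<and> ph s = 1 then hi (dep s) (idx s)
         else lo (dep s) (idx s)))"

definition passL :: "st \<Rightarrow> bool \<Rightarrow> bool" where
  "passL s \<sigma> \<longleftrightarrow> lo (dep s) (idx s) = 0 \<or> \<sigma>"

definition passR :: "st \<Rightarrow> bool \<Rightarrow> bool" where
  "passR s \<sigma> \<longleftrightarrow> hi (dep s) (idx s) = 1 \<or> \<not> \<sigma>"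

definition commit_fail :: "nat \<Rightarrow> nat \<Rightarrow> st \<Rightarrow> bool \<Rightarrow> bool" where
  "commit_fail D C s \<sigma> \<longleftrightarrow>
     dep s = D \<and> cnt s (idx s) \<le> C \<and> ph s = 1 \<and> \<not> (pl s \<and> passR s \<sigma>)"

definition step :: "nat \<Rightarrow> nat \<Rightarrow> st \<Rightarrow> bool \<Rightarrow> st" where
  "step D C s \<sigma> =
     (if dep s < D then
        (if ph s = 0 then St (dep s) (idx s) 1 (passL s \<sigma>) (cnt s)
         else if ph s = 1 then
           (if pl s \<and> passR s \<sigma> then St (dep s) (idx s) 2 (pl s) (cnt s)
            else parent_st s)
         else
           (if \<sigma> then St (Suc (dep s)) (2 * idx s + 1) 0 False (cnt s)
            else St (Suc (dep s)) (2 * idx s) 0 False (cnt s)))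
      else if cnt s (idx s) \<le> C then
        (if ph s = 0 then St (dep s) (idx s) 1 (passL s \<sigma>) (cnt s)
         else if pl s \<and> passR s \<sigma>
           then St (dep s) (idx s) 0 False ((cnt s)(idx s := Suc (cnt s (idx s))))
           else parent_st s)
      else s)"

text \<open>State at the beginning of round t (rounds 0,...,T-1), given the
  observed feedback sequence sigma.\<close>
primrec run :: "nat \<Rightarrow> nat \<Rightarrow> (nat \<Rightarrow> bool) \<Rightarrow> nat \<Rightarrow> st" where
  "run D C \<sigma> 0 = init_st"
| "run D C \<sigma> (Suc t) = step D C (run D C \<sigma> t) (\<sigma> t)"

definition posted :: "nat \<Rightarrow> nat \<Rightarrow> (nat \<Rightarrow> bool) \<Rightarrow> nat \<Rightarrow> real" where
  "posted D C \<sigma> t = price D C (run D C \<sigma> t)"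

definition corruptions :: "nat \<Rightarrow> nat \<Rightarrow> real \<Rightarrow> (nat \<Rightarrow> bool) \<Rightarrow> nat" where
  "corruptions T C v \<sigma> =
     card {t. t < T \<and> \<sigma> t \<noteq> (posted (depthD T) C \<sigma> t \<le> v)}"

definition star_leaf :: "nat \<Rightarrow> real \<Rightarrow> nat" where
  "star_leaf D v = nat \<lfloor>v * 2 ^ D\<rfloor>"

definition leaf_regret :: "nat \<Rightarrow> nat \<Rightarrow> real \<Rightarrow> (nat \<Rightarrow> bool) \<Rightarrow> nat \<Rightarrow> real" where
  "leaf_regret T C v \<sigma> k =
     (\<Sum>t\<in>{t. t < T \<and> dep (run (depthD T) C \<sigma> t) = depthD T
                   \<and> idx (run (depthD T) C \<sigma> t) = k}.
        v - (if posted (depthD T) C \<sigma> t \<le> v then posted (depthD T) C \<sigma> t else 0))"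

definition NF :: "nat \<Rightarrow> nat \<Rightarrow> real \<Rightarrow> (nat \<Rightarrow> bool) \<Rightarrow> nat" where
  "NF T C v \<sigma> =
     card {t. t < T \<and> commit_fail (depthD T) C (run (depthD T) C \<sigma> t) (\<sigma> t)
              \<and> idx (run (depthD T) C \<sigma> t) \<noteq> star_leaf (depthD T) v}"

end

theory Submission
  imports Defs
begin

text \<open>Charge every corrupted round 3, every failed check on a leaf not containing v
  (counted by N_F) 2, and every round 1/2^D.  Internal rounds cost no regret.  On the leaf
  containing v, posting L costs at most its width 1/2^D, and posting R costs at most 1 but
  ends the check, which either fails only through a corrupted answer or increments that
  leaf's counter, at most C + 1 times in all.  On any other leaf a check costs at most 2: it
  fails, or it passes only through a corrupted answer; this also keeps the counters there
  at most C, so only the leaf containing v can reach commitment.  A potential carrying the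
  regret of the L-query until the check is decided makes the charges cover the regret
  round by round, and telescoping gives 2 N_F + 3 C + T/2^D + (C + 2) \<le> 2 N_F + 4 C + 3.\<close>

lemma hi_minus_lo: "hi d k - lo d k = 1 / 2 ^ d"
  by (simp add: hi_def lo_def diff_divide_distrib[symmetric])

lemma price_nonneg: "0 \<le> price D C s"
  by (simp add: price_def lo_def hi_def mid_def)

lemma star_leaf_iff:
  assumes "0 \<le> v"
  shows "k = star_leaf D v \<longleftrightarrow> lo D k \<le> v \<and> v < hi D k"
proof -
  have pos: "(0::real) < 2 ^ D" by simp
  have "k = star_leaf D v \<longleftrightarrow> \<lfloor>v * 2 ^ D\<rfloor> = int k"
    unfolding star_leaf_def using assms by auto
  also have "\<dots> \<longleftrightarrow> real k \<le> v * 2 ^ D \<and> v * 2 ^ D < real k + 1"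
    by (simp add: floor_eq_iff)
  finally show ?thesis
    using pos by (simp add: lo_def hi_def divide_le_eq less_divide_eq add.commute)
qed

lemma hi_le_if_not_star_leaf:
  assumes "0 \<le> v" "k \<noteq> star_leaf D v" "lo D k \<le> v"
  shows "hi D k \<le> v"
  using star_leaf_iff[OF assms(1), of k D] assms(2,3) by auto

lemma two_pow_depthD_ge:
  assumes "1 \<le> T"
  shows "real T \<le> 2 ^ depthD T"
proof -
  have "real T = 2 powr log 2 (real T)"
    using assms by simp
  also have "\<dots> \<le> 2 powr real (depthD T)"
    unfolding depthD_def by (rule powr_mono) (simp_all add: real_nat_ceiling_ge)
  also have "\<dots> = 2 ^ depthD T"
    by (simp add: powr_realpow)
  finally show ?thesis .
qed

lemma card_lessThan_Suc_filter:
  "card {t. t < Suc n \<and> P t} = card {t. t < n \<and> P t} + of_bool (P n)"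
proof (cases "P n")
  case True
  then have "{t. t < Suc n \<and> P t} = insert n {t. t < n \<and> P t}"
    by auto
  then show ?thesis
    using True by simp
next
  case False
  then have "{t. t < Suc n \<and> P t} = {t. t < n \<and> P t}"
    using less_Suc_eq by auto
  then show ?thesis
    using False by simp
qed

lemma card_lessThan_filter_mono:
  assumes "m \<le> (n::nat)"
  shows "card {t. t < m \<and> P t} \<le> card {t. t < n \<and> P t}"
  using assms by (intro card_mono) auto

definition regret :: "real \<Rightarrow> real \<Rightarrow> real" where
  "regret v p = v - (if p \<le> v then p else 0)"

definition state_regret :: "nat \<Rightarrow> nat \<Rightarrow> real \<Rightarrow> st \<Rightarrow> real" where
  "state_regret D C v s = (if dep s = D then regret v (price D C s) else 0)"

definition corrupted :: "nat \<Rightarrow> nat \<Rightarrow> real \<Rightarrow> st \<Rightarrow> bool \<Rightarrow> bool" where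
  "corrupted D C v s b \<longleftrightarrow> b \<noteq> (price D C s \<le> v)"

definition fails_off_star :: "nat \<Rightarrow> nat \<Rightarrow> real \<Rightarrow> st \<Rightarrow> bool \<Rightarrow> bool" where
  "fails_off_star D C v s b \<longleftrightarrow> commit_fail D C s b \<and> idx s \<noteq> star_leaf D v"

lemma regret_nonneg: "0 \<le> v \<Longrightarrow> 0 \<le> regret v p"
  by (simp add: regret_def)

lemma state_regret_le_one: "v < 1 \<Longrightarrow> state_regret D C v s \<le> 1"
  using price_nonneg[of D C s] by (simp add: state_regret_def regret_def)

lemma regret_lo_star_leaf:
  assumes "0 \<le> v"
  shows "regret v (lo D (star_leaf D v)) \<le> 1 / 2 ^ D"
  using star_leaf_iff[OF assms, of "star_leaf D v" D] hi_minus_lo[of D "star_leaf D v"]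
  by (simp add: regret_def)

definition wf_state :: "nat \<Rightarrow> nat \<Rightarrow> st \<Rightarrow> bool" where
  "wf_state D C s \<longleftrightarrow> dep s \<le> D \<and> (dep s = D \<longrightarrow> ph s \<le> 1) \<and> (\<forall>k. cnt s k \<le> Suc C)"

definition false_pass_pending :: "nat \<Rightarrow> real \<Rightarrow> st \<Rightarrow> nat \<Rightarrow> bool" where
  "false_pass_pending D v s k \<longleftrightarrow> dep s = D \<and> idx s = k \<and> ph s = 1 \<and> pl s \<and> v < lo D k"

text \<open>A check passed on a leaf not containing v needs a corrupted answer, at L (pending
  until the R-query) or at R, so the n corruptions so far pay for these counters.\<close>

definition counts_paid :: "nat \<Rightarrow> real \<Rightarrow> st \<Rightarrow> nat \<Rightarrow> bool" where
  "counts_paid D v s n \<longleftrightarrow>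
     (\<forall>k. k \<noteq> star_leaf D v \<longrightarrow> cnt s k + of_bool (false_pass_pending D v s k) \<le> n)"

lemma wf_state_step:
  "wf_state D C s \<Longrightarrow> wf_state D C (step D C s b)"
  by (auto simp: wf_state_def step_def parent_st_def)

lemma round_cases:
  assumes "wf_state D C s"
  obtains (internal) "dep s < D"
    | (committed) "dep s = D" "C < cnt s (idx s)"
    | (probe_lo) "dep s = D" "cnt s (idx s) \<le> C" "ph s = 0"
    | (check_passed) "dep s = D" "cnt s (idx s) \<le> C" "ph s = 1" "pl s" "passR s b"
    | (check_failed) "dep s = D" "cnt s (idx s) \<le> C" "ph s = 1" "\<not> (pl s \<and> passR s b)"
  using assms by (force simp: wf_state_def)

lemma counts_paid_step:
  assumes v: "0 \<le> v" "v < 1" and wf: "wf_state D C s" and paid: "counts_paid D v s n"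
  shows "counts_paid D v (step D C s b) (n + of_bool (corrupted D C v s b))"
  using wf
proof (cases rule: round_cases[where b = b])
  case probe_lo
  have "corrupted D C v s b" if "passL s b" "v < lo D (idx s)"
    using that v probe_lo by (auto simp: passL_def corrupted_def price_def)
  then show ?thesis
    using paid probe_lo by (auto simp: counts_paid_def step_def false_pass_pending_def)
next
  case check_passed
  have "cnt s (idx s) < n + of_bool (corrupted D C v s b)" if off_star: "idx s \<noteq> star_leaf D v"
  proof (cases "v < lo D (idx s)")
    case True
    then show ?thesis
      using paid off_star check_passed by (force simp: counts_paid_def false_pass_pending_def)
  next
    case False
    then have "hi D (idx s) \<le> v"
      using hi_le_if_not_star_leaf[OF v(1) off_star] by simp
    then have "corrupted D C v s b"
      using check_passed v(2) by (auto simp: passR_def corrupted_def price_def)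
    then show ?thesis
      using paid off_star by (force simp: counts_paid_def)
  qed
  then show ?thesis
    using paid check_passed by (auto simp: counts_paid_def step_def false_pass_pending_def)
qed (use paid in \<open>auto simp: counts_paid_def step_def parent_st_def false_pass_pending_def\<close>)

definition corruptions_before :: "nat \<Rightarrow> nat \<Rightarrow> real \<Rightarrow> (nat \<Rightarrow> bool) \<Rightarrow> nat \<Rightarrow> nat" where
  "corruptions_before D C v \<sigma> n = card {t. t < n \<and> corrupted D C v (run D C \<sigma> t) (\<sigma> t)}"

lemma corruptions_before_Suc:
  "corruptions_before D C v \<sigma> (Suc n)
     = corruptions_before D C v \<sigma> n + of_bool (corrupted D C v (run D C \<sigma> n) (\<sigma> n))"
  unfolding corruptions_before_def by (rule card_lessThan_Suc_filter)

lemma run_invariants: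
  assumes "0 \<le> v" "v < 1"
  shows "wf_state D C (run D C \<sigma> n) \<and> counts_paid D v (run D C \<sigma> n) (corruptions_before D C v \<sigma> n)"
proof (induction n)
  case 0
  show ?case
    by (simp add: init_st_def wf_state_def counts_paid_def false_pass_pending_def
        corruptions_before_def)
next
  case (Suc n)
  then show ?case
    using wf_state_step counts_paid_step[OF assms] by (simp add: corruptions_before_Suc)
qed

text \<open>The regret of the L-query of a leaf check, carried while the R-query is posted: 1 off
  the leaf containing v, 0 on it, and a credit of 2 if the L-answer was corrupted (whose
  charge of 3 pays for more than that query).\<close>

definition check_debt :: "nat \<Rightarrow> real \<Rightarrow> st \<Rightarrow> real" where
  "check_debt D v s =
     (if dep s = D \<and> ph s = 1 then
        (if pl s \<noteq> (lo D (idx s) \<le> v) then -2 else if idx s = star_leaf D v then 0 else 1)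
      else 0)"

definition potential :: "nat \<Rightarrow> real \<Rightarrow> st \<Rightarrow> real" where
  "potential D v s = real (cnt s (star_leaf D v)) + check_debt D v s"

definition charge :: "nat \<Rightarrow> nat \<Rightarrow> real \<Rightarrow> st \<Rightarrow> bool \<Rightarrow> real" where
  "charge D C v s b =
     2 * of_bool (fails_off_star D C v s b) + 3 * of_bool (corrupted D C v s b) + 1 / 2 ^ D"

lemma check_debt_bounds: "-2 \<le> check_debt D v s" "check_debt D v s \<le> 1"
  by (simp_all add: check_debt_def)

lemma charge_ge:
  "0 \<le> charge D C v s b"
  "1 / 2 ^ D \<le> charge D C v s b"
  "corrupted D C v s b \<Longrightarrow> 3 \<le> charge D C v s b"
  "fails_off_star D C v s b \<Longrightarrow> 2 \<le> charge D C v s b"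
  by (simp_all add: charge_def add_nonneg_nonneg)

lemma amortized_committed:
  assumes "0 \<le> v" and paid: "counts_paid D v s n" and "n \<le> C"
    and leaf: "dep s = D" "C < cnt s (idx s)"
  shows "state_regret D C v s + potential D v s \<le> charge D C v s b + potential D v (step D C s b)"
proof -
  have "idx s = star_leaf D v"
    using paid \<open>n \<le> C\<close> leaf(2) by (force simp: counts_paid_def)
  then have "state_regret D C v s \<le> 1 / 2 ^ D"
    using leaf regret_lo_star_leaf[OF \<open>0 \<le> v\<close>] by (simp add: state_regret_def price_def)
  moreover have "step D C s b = s"
    using leaf by (simp add: step_def)
  ultimately show ?thesis
    using charge_ge(2)[of D C v s b] by simp
qed

lemma amortized_probe_lo:
  assumes v: "0 \<le> v" "v < 1" and leaf: "dep s = D" "cnt s (idx s) \<le> C" "ph s = 0"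
  shows "state_regret D C v s + potential D v s \<le> charge D C v s b + potential D v (step D C s b)"
proof -
  have step: "step D C s b = St D (idx s) 1 (passL s b) (cnt s)"
    using leaf by (simp add: step_def)
  have price: "price D C s = lo D (idx s)"
    using leaf by (simp add: price_def)
  have debt: "check_debt D v s = 0"
    using leaf by (simp add: check_debt_def)
  show ?thesis
  proof (cases "corrupted D C v s b")
    case True
    then show ?thesis
      using state_regret_le_one[OF v(2), of D C s] check_debt_bounds(1)[of D v "step D C s b"]
        step debt charge_ge(3)[of D C v s b]
      by (simp add: potential_def)
  next
    case False
    then have pl: "passL s b = (lo D (idx s) \<le> v)"
      using price leaf(1) v(1) by (auto simp: corrupted_def passL_def)
    show ?thesis
    proof (cases "idx s = star_leaf D v")
      case True
      then show ?thesis
        using regret_lo_star_leaf[OF v(1), of D] leaf price step debt pl charge_ge(2)[of D C v s b]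
        by (simp add: state_regret_def potential_def check_debt_def)
    next
      case False
      then show ?thesis
        using state_regret_le_one[OF v(2), of D C s] step debt pl charge_ge(1)[of D C v s b]
        by (simp add: potential_def check_debt_def)
    qed
  qed
qed

lemma amortized_check_passed:
  assumes v: "0 \<le> v" "v < 1" and leaf: "dep s = D" "cnt s (idx s) \<le> C" "ph s = 1"
    and pass: "pl s" "passR s b"
  shows "state_regret D C v s + potential D v s \<le> charge D C v s b + potential D v (step D C s b)"
proof -
  let ?k = "idx s" and ?star = "star_leaf D v"
  have step: "step D C s b = St D ?k 0 False ((cnt s)(?k := Suc (cnt s ?k)))"
    using leaf pass by (simp add: step_def)
  have regret: "state_regret D C v s \<le> 1"
    by (rule state_regret_le_one[OF v(2)])
  consider (star) "?k = ?star" | (low) "?k \<noteq> ?star" "v < lo D ?k"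
    | (high) "?k \<noteq> ?star" "lo D ?k \<le> v"
    by linarith
  then show ?thesis
  proof cases
    case star
    then show ?thesis
      using regret step leaf charge_ge(1)[of D C v s b]
      by (simp add: potential_def check_debt_def)
  next
    case low
    then show ?thesis
      using regret step leaf pass charge_ge(1)[of D C v s b]
      by (simp add: potential_def check_debt_def)
  next
    case high
    then have "hi D ?k \<le> v"
      using hi_le_if_not_star_leaf[OF v(1)] by blast
    then have "corrupted D C v s b"
      using pass leaf v(2) by (auto simp: passR_def corrupted_def price_def)
    then show ?thesis
      using regret step high check_debt_bounds(2)[of D v s] charge_ge(3)[of D C v s b]
      by (simp add: potential_def check_debt_def)
  qed
qed

lemma amortized_check_failed:
  assumes v: "0 \<le> v" "v < 1" and leaf: "dep s = D" "cnt s (idx s) \<le> C" "ph s = 1"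
    and fail: "\<not> (pl s \<and> passR s b)"
  shows "state_regret D C v s + potential D v s \<le> charge D C v s b + potential D v (step D C s b)"
proof -
  let ?k = "idx s" and ?star = "star_leaf D v"
  have step: "step D C s b = parent_st s"
    using leaf fail by (auto simp: step_def)
  have regret: "state_regret D C v s \<le> 1"
    by (rule state_regret_le_one[OF v(2)])
  consider (off_star) "?k \<noteq> ?star" | (unpassed) "?k = ?star" "\<not> pl s"
    | (high) "?k = ?star" "pl s" "\<not> passR s b"
    using fail by blast
  then show ?thesis
  proof cases
    case off_star
    then have "fails_off_star D C v s b"
      using leaf fail by (simp add: fails_off_star_def commit_fail_def)
    then show ?thesis
      using regret step check_debt_bounds(2)[of D v s] charge_ge(4)[of D C v s b]
      by (simp add: potential_def check_debt_def parent_st_def)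
  next
    case unpassed
    then have "lo D ?k \<le> v"
      using star_leaf_iff[OF v(1)] by blast
    then show ?thesis
      using unpassed regret step leaf charge_ge(1)[of D C v s b]
      by (simp add: potential_def check_debt_def parent_st_def)
  next
    case high
    then have "v < hi D ?k"
      using star_leaf_iff[OF v(1)] by blast
    then have "corrupted D C v s b"
      using high leaf by (auto simp: passR_def corrupted_def price_def)
    then show ?thesis
      using regret step check_debt_bounds(2)[of D v s] charge_ge(3)[of D C v s b]
      by (simp add: potential_def check_debt_def parent_st_def)
  qed
qed

lemma amortized_step:
  assumes v: "0 \<le> v" "v < 1" and wf: "wf_state D C s" and paid: "counts_paid D v s n"
    and "n \<le> C"
  shows "state_regret D C v s + potential D v s \<le> charge D C v s b + potential D v (step D C s b)"
  using wf
proof (cases rule: round_cases[where b = b])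
  case internal
  then show ?thesis
    using charge_ge(1)[of D C v s b]
    by (auto simp: state_regret_def potential_def check_debt_def step_def parent_st_def)
qed (use amortized_committed[OF v(1) paid \<open>n \<le> C\<close>] amortized_probe_lo[OF v]
       amortized_check_passed[OF v] amortized_check_failed[OF v] in blast)+

definition fails_before :: "nat \<Rightarrow> nat \<Rightarrow> real \<Rightarrow> (nat \<Rightarrow> bool) \<Rightarrow> nat \<Rightarrow> nat" where
  "fails_before D C v \<sigma> n = card {t. t < n \<and> fails_off_star D C v (run D C \<sigma> t) (\<sigma> t)}"

lemma sum_charge_run:
  "(\<Sum>t<n. charge D C v (run D C \<sigma> t) (\<sigma> t))
     = 2 * real (fails_before D C v \<sigma> n) + 3 * real (corruptions_before D C v \<sigma> n) + real n / 2 ^ D"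
proof -
  have filter: "{..<n} \<inter> {t. P t} = {t. t < n \<and> P t}" for P :: "nat \<Rightarrow> bool"
    by auto
  show ?thesis
    by (simp add: charge_def sum.distrib sum_distrib_left[symmetric] filter
        fails_before_def corruptions_before_def)
qed

lemma potential_run_le:
  assumes "0 \<le> v" "v < 1"
  shows "potential D v (run D C \<sigma> n) \<le> real C + 2"
proof -
  have "cnt (run D C \<sigma> n) (star_leaf D v) \<le> Suc C"
    using run_invariants[OF assms, of D C \<sigma> n] by (simp add: wf_state_def)
  then show ?thesis
    using check_debt_bounds(2)[of D v "run D C \<sigma> n"] by (simp add: potential_def)
qed

lemma sum_state_regret_run_le:
  assumes v: "0 \<le> v" "v < 1" and budget: "corruptions_before D C v \<sigma> n \<le> C"
  shows "(\<Sum>t<n. state_regret D C v (run D C \<sigma> t))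
     \<le> 2 * real (fails_before D C v \<sigma> n) + 3 * real (corruptions_before D C v \<sigma> n)
       + real n / 2 ^ D + potential D v (run D C \<sigma> n)"
proof -
  let ?r = "run D C \<sigma>" and ?P = "potential D v"
  have "(\<Sum>t<n. state_regret D C v (?r t))
      \<le> (\<Sum>t<n. charge D C v (?r t) (\<sigma> t) + (?P (?r (Suc t)) - ?P (?r t)))"
  proof (rule sum_mono)
    fix t
    assume "t \<in> {..<n}"
    then have budget_t: "corruptions_before D C v \<sigma> t \<le> C"
      using budget card_lessThan_filter_mono[of t n] unfolding corruptions_before_def
      by (meson lessThan_iff less_imp_le order_trans)
    show "state_regret D C v (?r t) \<le> charge D C v (?r t) (\<sigma> t) + (?P (?r (Suc t)) - ?P (?r t))"
      using amortized_step[OF v _ _ budget_t, where D = D and s = "?r t" and b = "\<sigma> t"]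
        run_invariants[OF v, of D C \<sigma> t]
      by simp
  qed
  also have "\<dots> = (\<Sum>t<n. charge D C v (?r t) (\<sigma> t)) + (?P (?r n) - ?P (?r 0))"
    unfolding sum.distrib sum_lessThan_telescope[of "\<lambda>t. ?P (?r t)"] ..
  also have "?P (?r 0) = 0"
    by (simp add: potential_def check_debt_def init_st_def)
  finally show ?thesis
    by (simp add: sum_charge_run)
qed

lemma sum_leaf_regret_le:
  assumes "0 \<le> v"
  shows "(\<Sum>k<2 ^ depthD T. leaf_regret T C v \<sigma> k)
     \<le> (\<Sum>t<T. state_regret (depthD T) C v (run (depthD T) C \<sigma> t))"
proof -
  define D where "D = depthD T"
  let ?r = "run D C \<sigma>" and ?g = "\<lambda>t. regret v (price D C (run D C \<sigma> t))"
  have leaf: "leaf_regret T C v \<sigma> k = (\<Sum>t<T. if dep (?r t) = D \<and> idx (?r t) = k then ?g t else 0)"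
    for k
  proof -
    have leaf_rounds: "{t. t < T \<and> dep (?r t) = D \<and> idx (?r t) = k}
        = {t \<in> {..<T}. dep (?r t) = D \<and> idx (?r t) = k}"
      by auto
    show ?thesis
      unfolding leaf_regret_def D_def[symmetric] regret_def posted_def leaf_rounds
      by (rule sum.inter_filter[of "{..<T}"]) simp
  qed
  have "(\<Sum>k<2 ^ D. leaf_regret T C v \<sigma> k)
      = (\<Sum>t<T. \<Sum>k<2 ^ D. if dep (?r t) = D \<and> idx (?r t) = k then ?g t else 0)"
    unfolding leaf by (rule sum.swap)
  also have "\<dots> \<le> (\<Sum>t<T. state_regret D C v (?r t))"
    using regret_nonneg[OF assms]
    by (intro sum_mono) (simp add: state_regret_def sum.delta)
  finally show ?thesis
    unfolding D_def .
qed

theorem lemma4p2: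
  fixes T C :: nat and v :: real and \<sigma> :: "nat \<Rightarrow> bool"
  assumes "1 \<le> T"
    and "0 \<le> v" and "v < 1"
    and "corruptions T C v \<sigma> \<le> C"
  shows "(\<Sum>k<2 ^ depthD T. leaf_regret T C v \<sigma> k)
           \<le> 2 * real (NF T C v \<sigma>) + 6 * real C + 3"
proof -
  define D where "D = depthD T"
  have corruptions: "corruptions_before D C v \<sigma> T = corruptions T C v \<sigma>"
    unfolding corruptions_before_def corruptions_def corrupted_def posted_def D_def ..
  have fails: "fails_before D C v \<sigma> T = NF T C v \<sigma>"
    unfolding fails_before_def NF_def fails_off_star_def D_def ..
  have "(\<Sum>k<2 ^ D. leaf_regret T C v \<sigma> k) \<le> (\<Sum>t<T. state_regret D C v (run D C \<sigma> t))"
    unfolding D_def using sum_leaf_regret_le[OF assms(2)] .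
  also have "\<dots> \<le> 2 * real (fails_before D C v \<sigma> T) + 3 * real (corruptions_before D C v \<sigma> T)
      + real T / 2 ^ D + potential D v (run D C \<sigma> T)"
    using assms(4) corruptions by (intro sum_state_regret_run_le[OF assms(2,3)]) simp
  also have "\<dots> \<le> 2 * real (NF T C v \<sigma>) + 3 * real C + real T / 2 ^ D + (real C + 2)"
    using assms(4) corruptions fails potential_run_le[OF assms(2,3), of D C \<sigma> T] by simp
  also have "real T / 2 ^ D \<le> 1"
    using two_pow_depthD_ge[OF assms(1)] unfolding D_def by simp
  finally show ?thesis
    unfolding D_def by simp
qed

end
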